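(* Let $G,H,K,L$ be graphs with $G\mid K$ and $H\mid L$. If $K$ and $L$ are strongly disjoint, then $G$ and $H$ are strongly disjoint. If $K$ and $L$ are weakly disjoint, then $G$ and $H$ are weakly disjoint.
   Context: A weight function on finite $U$ is $\alpha:U\times U\to\mathbb{R}$, $\alpha\ge0$, symmetric, summing to $1$; degree $p(u)=\sum_{u'}\alpha(u,u')$; a graph is $(U,\alpha)$. For graphs $G=(U,\alpha)$, $H=(V,\beta)$ with degrees $p,q$, $H\mid G$ means there is a surjective $\phi:U\to V$ with (i) $q(v)=\sum_{u\in\phi^{-1}(v)}p(u)$ for all $v$, and (ii) $q(v)\sum_{u'\in\phi^{-1}(v')}\alpha(u,u')=p(u)\beta(v,v')$ for all $v,v'$, $u\in\phi^{-1}(v)$. A weight joining of $\alpha,\beta$ is a weight function $\gamma$ on $U\times V$ with degree $r(u,v)=\sum_{(u',v')}\gamma((u,v),(u',v'))$ such that $\sum_v r(u,v)=p(u)$, $\sum_u r(u,v)=q(v)$, $p(u)\sum_{\tilde v}\gamma((u,v),(u',\tilde v))=\alpha(u,u')r(u,v)$ and $q(v)\sum_{\tilde u}\gamma((u,v),(\tilde u,v'))=\beta(v,v')r(u,v)$ for all $u,u',v,v'$. Graphs $(U,\alpha),(V,\beta)$ are strongly disjoint if the only weight joining is $\alpha\otimes\beta$, $(\alpha\otimes\beta)((u,v),(u',v'))=\alpha(u,u')\beta(v,v')$; weakly disjoint if every weight joining has degree $r(u,v)=p(u)q(v)$. *)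

theory Defs
  imports Complex_Main
begin

text \<open>A graph is a weight function on a finite vertex set; the vertex set is
  modelled as the (finite) universe of a type.\<close>

definition weight_fun :: "('a::finite \<Rightarrow> 'a \<Rightarrow> real) \<Rightarrow> bool" where
  "weight_fun \<alpha> \<longleftrightarrow> (\<forall>u u'. 0 \<le> \<alpha> u u') \<and> (\<forall>u u'. \<alpha> u u' = \<alpha> u' u)
     \<and> (\<Sum>u\<in>UNIV. \<Sum>u'\<in>UNIV. \<alpha> u u') = 1"

definition deg :: "('a::finite \<Rightarrow> 'a \<Rightarrow> real) \<Rightarrow> 'a \<Rightarrow> real" where
  "deg \<alpha> u = (\<Sum>u'\<in>UNIV. \<alpha> u u')"

text \<open>\<open>graph_divides \<beta> \<alpha>\<close> means H | G for H = (V,\<beta>), G = (U,\<alpha>).\<close>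
definition graph_divides :: "('b::finite \<Rightarrow> 'b \<Rightarrow> real) \<Rightarrow> ('a::finite \<Rightarrow> 'a \<Rightarrow> real) \<Rightarrow> bool" where
  "graph_divides \<beta> \<alpha> \<longleftrightarrow> (\<exists>\<phi> :: 'a \<Rightarrow> 'b. surj \<phi> \<and>
     (\<forall>v. deg \<beta> v = (\<Sum>u\<in>\<phi> -` {v}. deg \<alpha> u)) \<and>
     (\<forall>v v' u. \<phi> u = v \<longrightarrow>
        deg \<beta> v * (\<Sum>u'\<in>\<phi> -` {v'}. \<alpha> u u') = deg \<alpha> u * \<beta> v v'))"

definition weight_joining ::
  "('a::finite \<Rightarrow> 'a \<Rightarrow> real) \<Rightarrow> ('b::finite \<Rightarrow> 'b \<Rightarrow> real)
     \<Rightarrow> ('a \<times> 'b \<Rightarrow> 'a \<times> 'b \<Rightarrow> real) \<Rightarrow> bool" where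
  "weight_joining \<alpha> \<beta> \<gamma> \<longleftrightarrow> weight_fun \<gamma> \<and>
     (\<forall>u. (\<Sum>v\<in>UNIV. deg \<gamma> (u,v)) = deg \<alpha> u) \<and>
     (\<forall>v. (\<Sum>u\<in>UNIV. deg \<gamma> (u,v)) = deg \<beta> v) \<and>
     (\<forall>u u' v. deg \<alpha> u * (\<Sum>v'\<in>UNIV. \<gamma> (u,v) (u',v')) = \<alpha> u u' * deg \<gamma> (u,v)) \<and>
     (\<forall>u v v'. deg \<beta> v * (\<Sum>u'\<in>UNIV. \<gamma> (u,v) (u',v')) = \<beta> v v' * deg \<gamma> (u,v))"

definition tensor_weight ::
  "('a \<Rightarrow> 'a \<Rightarrow> real) \<Rightarrow> ('b \<Rightarrow> 'b \<Rightarrow> real) \<Rightarrow> ('a \<times> 'b \<Rightarrow> 'a \<times> 'b \<Rightarrow> real)" where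
  "tensor_weight \<alpha> \<beta> = (\<lambda>(u,v) (u',v'). \<alpha> u u' * \<beta> v v')"

definition strongly_disjoint :: "('a::finite \<Rightarrow> 'a \<Rightarrow> real) \<Rightarrow> ('b::finite \<Rightarrow> 'b \<Rightarrow> real) \<Rightarrow> bool" where
  "strongly_disjoint \<alpha> \<beta> \<longleftrightarrow> (\<forall>\<gamma>. weight_joining \<alpha> \<beta> \<gamma> \<longrightarrow> \<gamma> = tensor_weight \<alpha> \<beta>)"

definition weakly_disjoint :: "('a::finite \<Rightarrow> 'a \<Rightarrow> real) \<Rightarrow> ('b::finite \<Rightarrow> 'b \<Rightarrow> real) \<Rightarrow> bool" where
  "weakly_disjoint \<alpha> \<beta> \<longleftrightarrow> (\<forall>\<gamma>. weight_joining \<alpha> \<beta> \<gamma> \<longrightarrow>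
     (\<forall>u v. deg \<gamma> (u,v) = deg \<alpha> u * deg \<beta> v))"

end

theory Submission
  imports Defs
begin

text \<open>Let \<open>\<phi> : K \<rightarrow> G\<close> witness \<open>G | K\<close>. A joining \<open>\<gamma>\<close> of \<open>G\<close> and \<open>H\<close> lifts to the
  joining \<open>\<gamma>~((k,h),(k',h')) = \<gamma>((\<phi> k,h),(\<phi> k',h')) \<alpha>\<^sub>K(k,k') / \<alpha>\<^sub>G(\<phi> k,\<phi> k')\<close> of
  \<open>K\<close> and \<open>H\<close>, which pushes forward along \<open>\<phi> \<times> id\<close> to \<open>\<gamma>\<close>, degrees included. If \<open>K\<close>
  and \<open>H\<close> are strongly (weakly) disjoint, \<open>\<gamma>~\<close> is the product joining (has product
  degree), and pushing forward shows the same for \<open>\<gamma>\<close>. Since joinings are symmetric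
  under swapping the two factors, the same argument passes from \<open>L\<close> to \<open>H\<close> in the
  second coordinate.\<close>

lemma sum_UNIV_fibres:
  fixes f :: "'a::finite \<Rightarrow> 'c::comm_monoid_add" and \<phi> :: "'a \<Rightarrow> 'b::finite"
  shows "(\<Sum>x\<in>UNIV. f x) = (\<Sum>y\<in>UNIV. \<Sum>x\<in>\<phi> -` {y}. f x)"
proof -
  have "(\<Sum>y\<in>UNIV. \<Sum>x\<in>\<phi> -` {y}. f x) = (\<Sum>y\<in>UNIV. sum f {x. x \<in> UNIV \<and> \<phi> x = y})"
    by (intro sum.cong) auto
  also have "\<dots> = sum f UNIV"
    by (rule sum.group) auto
  finally show ?thesis by simp
qed

lemma sum_UNIV_prod:
  fixes f :: "'a::finite \<times> 'b::finite \<Rightarrow> 'c::comm_monoid_add"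
  shows "(\<Sum>x\<in>UNIV. f x) = (\<Sum>a\<in>UNIV. \<Sum>b\<in>UNIV. f (a,b))"
  by (simp add: sum.cartesian_product' flip: UNIV_Times_UNIV)

lemma sum_UNIV_prod_swap:
  fixes f :: "'a::finite \<times> 'b::finite \<Rightarrow> 'c::comm_monoid_add"
  shows "(\<Sum>x\<in>UNIV. f x) = (\<Sum>b\<in>UNIV. \<Sum>a\<in>UNIV. f (a,b))"
  unfolding sum_UNIV_prod by (rule sum.swap)

lemma deg_prod:
  fixes \<gamma> :: "'a::finite \<times> 'b::finite \<Rightarrow> 'a \<times> 'b \<Rightarrow> real"
  shows "deg \<gamma> x = (\<Sum>a\<in>UNIV. \<Sum>b\<in>UNIV. \<gamma> x (a,b))"
  unfolding deg_def by (rule sum_UNIV_prod)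

lemma deg_prod_swap:
  fixes \<gamma> :: "'a::finite \<times> 'b::finite \<Rightarrow> 'a \<times> 'b \<Rightarrow> real"
  shows "deg \<gamma> x = (\<Sum>b\<in>UNIV. \<Sum>a\<in>UNIV. \<gamma> x (a,b))"
  unfolding deg_def by (rule sum_UNIV_prod_swap)

lemma weight_funI:
  assumes "\<And>u u'. 0 \<le> \<alpha> u u'" and "\<And>u u'. \<alpha> u u' = \<alpha> u' u"
    and "(\<Sum>u\<in>UNIV. deg \<alpha> u) = 1"
  shows "weight_fun \<alpha>"
  using assms unfolding weight_fun_def deg_def by blast

lemma weight_fun_nonneg: "weight_fun \<alpha> \<Longrightarrow> 0 \<le> \<alpha> u u'"
  unfolding weight_fun_def by blast

lemma weight_fun_sym: "weight_fun \<alpha> \<Longrightarrow> \<alpha> u u' = \<alpha> u' u"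
  unfolding weight_fun_def by blast

lemma weight_fun_sum_deg: "weight_fun \<alpha> \<Longrightarrow> (\<Sum>u\<in>UNIV. deg \<alpha> u) = 1"
  unfolding weight_fun_def deg_def by blast

lemma deg_nonneg: "weight_fun \<alpha> \<Longrightarrow> 0 \<le> deg \<alpha> u"
  unfolding deg_def by (intro sum_nonneg) (auto intro: weight_fun_nonneg)

lemma weight_fun_deg_eq_0: "weight_fun \<alpha> \<Longrightarrow> deg \<alpha> u = 0 \<Longrightarrow> \<alpha> u u' = 0"
  unfolding deg_def by (subst (asm) sum_nonneg_eq_0_iff) (auto intro: weight_fun_nonneg)

lemma weight_joining_weight_fun: "weight_joining \<alpha> \<beta> \<gamma> \<Longrightarrow> weight_fun \<gamma>"
  unfolding weight_joining_def by blast

lemma weight_joining_deg_eq_0: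
  assumes "weight_joining \<alpha> \<beta> \<gamma>" and "deg \<alpha> u = 0"
  shows "deg \<gamma> (u,v) = 0"
proof -
  have "(\<Sum>v\<in>UNIV. deg \<gamma> (u,v)) = 0"
    using assms unfolding weight_joining_def by simp
  then show ?thesis
    by (subst (asm) sum_nonneg_eq_0_iff)
      (auto intro: deg_nonneg weight_joining_weight_fun[OF assms(1)])
qed

lemma weight_joining_row_sum:
  assumes "weight_joining \<alpha> \<beta> \<gamma>" and "deg \<alpha> u \<noteq> 0"
  shows "(\<Sum>v'\<in>UNIV. \<gamma> (u,v) (u',v')) = \<alpha> u u' * deg \<gamma> (u,v) / deg \<alpha> u"
proof -
  have "deg \<alpha> u * (\<Sum>v'\<in>UNIV. \<gamma> (u,v) (u',v')) = \<alpha> u u' * deg \<gamma> (u,v)"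
    using assms(1) unfolding weight_joining_def by blast
  then show ?thesis
    using assms(2) by (simp add: field_simps)
qed

lemma weight_joining_eq_0:
  assumes J: "weight_joining \<alpha> \<beta> \<gamma>" and "\<alpha> u u' = 0"
  shows "\<gamma> (u,v) (u',v') = 0"
proof (cases "deg \<alpha> u = 0")
  case True
  then show ?thesis
    using weight_joining_deg_eq_0[OF J] weight_fun_deg_eq_0 weight_joining_weight_fun[OF J]
    by blast
next
  case False
  then have "(\<Sum>v'\<in>UNIV. \<gamma> (u,v) (u',v')) = 0"
    using weight_joining_row_sum[OF J False] assms(2) by simp
  then show ?thesis
    by (subst (asm) sum_nonneg_eq_0_iff)
      (auto intro: weight_fun_nonneg weight_joining_weight_fun[OF J])
qed

subsection \<open>Factor maps\<close>

locale factor_map =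
  fixes \<alpha> :: "'a::finite \<Rightarrow> 'a \<Rightarrow> real" and \<kappa> :: "'k::finite \<Rightarrow> 'k \<Rightarrow> real"
    and \<phi> :: "'k \<Rightarrow> 'a"
  assumes weight_fun_quotient: "weight_fun \<alpha>" and weight_fun_cover: "weight_fun \<kappa>"
    and deg_quotient: "\<And>a. deg \<alpha> a = (\<Sum>k\<in>\<phi> -` {a}. deg \<kappa> k)"
    and weight_quotient:
      "\<And>a' k. deg \<alpha> (\<phi> k) * (\<Sum>k'\<in>\<phi> -` {a'}. \<kappa> k k') = deg \<kappa> k * \<alpha> (\<phi> k) a'"

lemma graph_divides_obtains_factor_map:
  assumes "graph_divides \<alpha> \<kappa>" and "weight_fun \<alpha>" and "weight_fun \<kappa>"
  obtains \<phi> where "factor_map \<alpha> \<kappa> \<phi>"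
  using assms unfolding graph_divides_def factor_map_def by blast

context factor_map
begin

lemma deg_cover_eq_0:
  assumes "deg \<alpha> (\<phi> k) = 0"
  shows "deg \<kappa> k = 0"
proof -
  have "(\<Sum>k'\<in>\<phi> -` {\<phi> k}. deg \<kappa> k') = 0"
    using assms deg_quotient[of "\<phi> k"] by simp
  then show ?thesis
    by (subst (asm) sum_nonneg_eq_0_iff) (auto intro: deg_nonneg weight_fun_cover)
qed

lemma fibre_row_sum:
  "(\<Sum>k'\<in>\<phi> -` {a'}. \<kappa> k k') = deg \<kappa> k * \<alpha> (\<phi> k) a' / deg \<alpha> (\<phi> k)"
proof (cases "deg \<alpha> (\<phi> k) = 0")
  case True
  then show ?thesis
    using deg_cover_eq_0 weight_fun_deg_eq_0[OF weight_fun_cover] by simp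
next
  case False
  then show ?thesis
    using weight_quotient[where a'=a' and k=k] by (simp add: field_simps)
qed

lemma fibre_block_sum: "(\<Sum>k\<in>\<phi> -` {a}. \<Sum>k'\<in>\<phi> -` {a'}. \<kappa> k k') = \<alpha> a a'"
proof (cases "deg \<alpha> a = 0")
  case True
  then show ?thesis
    using deg_cover_eq_0 weight_fun_deg_eq_0[OF weight_fun_cover]
      weight_fun_deg_eq_0[OF weight_fun_quotient] by simp
next
  case False
  have "(\<Sum>k\<in>\<phi> -` {a}. \<Sum>k'\<in>\<phi> -` {a'}. \<kappa> k k')
      = (\<Sum>k\<in>\<phi> -` {a}. deg \<kappa> k) * \<alpha> a a' / deg \<alpha> a"
    by (simp add: fibre_row_sum sum_distrib_right sum_divide_distrib)
  also have "\<dots> = \<alpha> a a'"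
    using False deg_quotient[of a] by simp
  finally show ?thesis .
qed

lemma cover_eq_0:
  assumes "\<alpha> (\<phi> k) (\<phi> k') = 0"
  shows "\<kappa> k k' = 0"
proof -
  have "(\<Sum>k''\<in>\<phi> -` {\<phi> k'}. \<kappa> k k'') = 0"
    using assms fibre_row_sum[where a'="\<phi> k'" and k=k] by simp
  then show ?thesis
    by (subst (asm) sum_nonneg_eq_0_iff) (auto intro: weight_fun_nonneg weight_fun_cover)
qed

end

text \<open>Where \<open>\<alpha> (\<phi> k) (\<phi> k') = 0\<close> the quotient is \<open>x / 0 = 0\<close>; this is harmless since the
  joining \<open>\<gamma>\<close> vanishes there as well (\<open>weight_joining_eq_0\<close>).\<close>

definition lift_joining :: "('k \<Rightarrow> 'a) \<Rightarrow> ('k \<Rightarrow> 'k \<Rightarrow> real) \<Rightarrow> ('a \<Rightarrow> 'a \<Rightarrow> real)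
    \<Rightarrow> ('a \<times> 'b \<Rightarrow> 'a \<times> 'b \<Rightarrow> real) \<Rightarrow> ('k \<times> 'b \<Rightarrow> 'k \<times> 'b \<Rightarrow> real)" where
  "lift_joining \<phi> \<kappa> \<alpha> \<gamma> =
     (\<lambda>(k,b) (k',b'). \<gamma> (\<phi> k, b) (\<phi> k', b') * \<kappa> k k' / \<alpha> (\<phi> k) (\<phi> k'))"

lemma lift_joining_apply:
  "lift_joining \<phi> \<kappa> \<alpha> \<gamma> (k,b) (k',b') = \<gamma> (\<phi> k, b) (\<phi> k', b') * \<kappa> k k' / \<alpha> (\<phi> k) (\<phi> k')"
  unfolding lift_joining_def by simp

context factor_map
begin

context
  fixes \<beta> :: "'b::finite \<Rightarrow> 'b \<Rightarrow> real" and \<gamma> :: "'a \<times> 'b \<Rightarrow> 'a \<times> 'b \<Rightarrow> real"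
  assumes joining: "weight_joining \<alpha> \<beta> \<gamma>"
begin

abbreviation lifted :: "'k \<times> 'b \<Rightarrow> 'k \<times> 'b \<Rightarrow> real" where
  "lifted \<equiv> lift_joining \<phi> \<kappa> \<alpha> \<gamma>"

lemma lift_joining_row_sum:
  "(\<Sum>k'\<in>UNIV. lifted (k,b) (k',b'))
     = deg \<kappa> k / deg \<alpha> (\<phi> k) * (\<Sum>a'\<in>UNIV. \<gamma> (\<phi> k, b) (a',b'))"
proof -
  have fibre: "\<gamma> (\<phi> k, b) (a', b') / \<alpha> (\<phi> k) a' * (\<Sum>k'\<in>\<phi> -` {a'}. \<kappa> k k')
      = deg \<kappa> k / deg \<alpha> (\<phi> k) * \<gamma> (\<phi> k, b) (a', b')" for a'
  proof (cases "\<alpha> (\<phi> k) a' = 0")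
    case True
    then show ?thesis using weight_joining_eq_0[OF joining True] by simp
  next
    case False
    then show ?thesis unfolding fibre_row_sum by (simp add: field_simps)
  qed
  have "(\<Sum>k'\<in>UNIV. lifted (k,b) (k',b')) = (\<Sum>a'\<in>UNIV. \<Sum>k'\<in>\<phi> -` {a'}. lifted (k,b) (k',b'))"
    by (rule sum_UNIV_fibres)
  also have "\<dots> = (\<Sum>a'\<in>UNIV. \<gamma> (\<phi> k, b) (a', b') / \<alpha> (\<phi> k) a' * (\<Sum>k'\<in>\<phi> -` {a'}. \<kappa> k k'))"
    by (intro sum.cong refl) (auto simp: lift_joining_apply sum_distrib_left)
  also have "\<dots> = deg \<kappa> k / deg \<alpha> (\<phi> k) * (\<Sum>a'\<in>UNIV. \<gamma> (\<phi> k, b) (a',b'))"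
    unfolding fibre by (rule sum_distrib_left[symmetric])
  finally show ?thesis .
qed

lemma deg_lift_joining: "deg lifted (k,b) = deg \<kappa> k * deg \<gamma> (\<phi> k, b) / deg \<alpha> (\<phi> k)"
proof -
  have "deg lifted (k,b) = (\<Sum>b'\<in>UNIV. \<Sum>k'\<in>UNIV. lifted (k,b) (k',b'))"
    by (rule deg_prod_swap)
  also have "\<dots> = deg \<kappa> k / deg \<alpha> (\<phi> k) * (\<Sum>b'\<in>UNIV. \<Sum>a'\<in>UNIV. \<gamma> (\<phi> k, b) (a',b'))"
    by (simp only: lift_joining_row_sum sum_distrib_left)
  finally show ?thesis by (simp add: deg_prod_swap)
qed

lemma lift_joining_fibre_sum:
  "(\<Sum>k\<in>\<phi> -` {a}. \<Sum>k'\<in>\<phi> -` {a'}. lifted (k,b) (k',b')) = \<gamma> (a,b) (a',b')"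
proof -
  have "(\<Sum>k\<in>\<phi> -` {a}. \<Sum>k'\<in>\<phi> -` {a'}. lifted (k,b) (k',b'))
      = (\<Sum>k\<in>\<phi> -` {a}. \<Sum>k'\<in>\<phi> -` {a'}. \<gamma> (a,b) (a',b') / \<alpha> a a' * \<kappa> k k')"
    by (intro sum.cong refl) (auto simp: lift_joining_apply)
  also have "\<dots> = \<gamma> (a,b) (a',b') / \<alpha> a a' * \<alpha> a a'"
    by (simp only: sum_distrib_left[symmetric] fibre_block_sum)
  also have "\<dots> = \<gamma> (a,b) (a',b')"
    using weight_joining_eq_0[OF joining, of a a' b b'] by (cases "\<alpha> a a' = 0") auto
  finally show ?thesis .
qed

lemma deg_lift_joining_fibre_sum: "(\<Sum>k\<in>\<phi> -` {a}. deg lifted (k,b)) = deg \<gamma> (a,b)"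
proof (cases "deg \<alpha> a = 0")
  case True
  then show ?thesis
    using weight_joining_deg_eq_0[OF joining True] by (simp add: deg_lift_joining)
next
  case False
  have "(\<Sum>k\<in>\<phi> -` {a}. deg lifted (k,b)) = (\<Sum>k\<in>\<phi> -` {a}. deg \<kappa> k) * deg \<gamma> (a,b) / deg \<alpha> a"
    by (simp add: deg_lift_joining sum_distrib_right sum_divide_distrib)
  also have "\<dots> = deg \<gamma> (a,b)"
    using False deg_quotient[of a] by simp
  finally show ?thesis .
qed

lemma weight_fun_lift_joining: "weight_fun lifted"
proof (rule weight_funI)
  have w: "weight_fun \<gamma>"
    using joining by (rule weight_joining_weight_fun)
  show "0 \<le> lifted x y" for x y
    using weight_fun_nonneg[OF w] weight_fun_nonneg[OF weight_fun_cover]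
      weight_fun_nonneg[OF weight_fun_quotient]
    by (cases x; cases y) (simp add: lift_joining_apply)
  show "lifted x y = lifted y x" for x y
    using weight_fun_sym[OF w] weight_fun_sym[OF weight_fun_cover]
      weight_fun_sym[OF weight_fun_quotient]
    by (cases x; cases y) (simp add: lift_joining_apply)
  have "(\<Sum>x\<in>UNIV. deg lifted x) = (\<Sum>b\<in>UNIV. \<Sum>a\<in>UNIV. \<Sum>k\<in>\<phi> -` {a}. deg lifted (k,b))"
    by (simp only: sum_UNIV_prod_swap flip: sum_UNIV_fibres)
  also have "\<dots> = (\<Sum>x\<in>UNIV. deg \<gamma> x)"
    by (simp only: deg_lift_joining_fibre_sum flip: sum_UNIV_prod_swap)
  finally show "(\<Sum>x\<in>UNIV. deg lifted x) = 1"
    using weight_fun_sum_deg[OF w] by simp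
qed

lemma weight_joining_lift_joining: "weight_joining \<kappa> \<beta> lifted"
proof -
  have marginal_cover: "(\<Sum>b\<in>UNIV. deg lifted (k,b)) = deg \<kappa> k" for k
  proof (cases "deg \<alpha> (\<phi> k) = 0")
    case True
    then show ?thesis using deg_cover_eq_0[OF True] by (simp add: deg_lift_joining)
  next
    case False
    have "(\<Sum>b\<in>UNIV. deg lifted (k,b)) = deg \<kappa> k * (\<Sum>b\<in>UNIV. deg \<gamma> (\<phi> k,b)) / deg \<alpha> (\<phi> k)"
      by (simp add: deg_lift_joining sum_distrib_left sum_divide_distrib)
    also have "\<dots> = deg \<kappa> k"
      using joining False unfolding weight_joining_def by simp
    finally show ?thesis .
  qed
  have marginal_other: "(\<Sum>k\<in>UNIV. deg lifted (k,b)) = deg \<beta> b" for b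
  proof -
    have "(\<Sum>k\<in>UNIV. deg lifted (k,b)) = (\<Sum>a\<in>UNIV. \<Sum>k\<in>\<phi> -` {a}. deg lifted (k,b))"
      by (rule sum_UNIV_fibres)
    also have "\<dots> = deg \<beta> b"
      using joining unfolding weight_joining_def by (simp add: deg_lift_joining_fibre_sum)
    finally show ?thesis .
  qed
  have cond_cover: "deg \<kappa> k * (\<Sum>b'\<in>UNIV. lifted (k,b) (k',b')) = \<kappa> k k' * deg lifted (k,b)"
    for k k' b
  proof -
    have row: "(\<Sum>b'\<in>UNIV. lifted (k,b) (k',b'))
        = \<kappa> k k' / \<alpha> (\<phi> k) (\<phi> k') * (\<Sum>b'\<in>UNIV. \<gamma> (\<phi> k, b) (\<phi> k', b'))"
      by (simp add: lift_joining_apply sum_distrib_left sum_divide_distrib mult.commute)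
    consider "deg \<alpha> (\<phi> k) = 0" | "\<alpha> (\<phi> k) (\<phi> k') = 0"
      | "deg \<alpha> (\<phi> k) \<noteq> 0" "\<alpha> (\<phi> k) (\<phi> k') \<noteq> 0"
      by blast
    then show ?thesis
    proof cases
      case 1
      then show ?thesis using deg_cover_eq_0 by (simp add: deg_lift_joining)
    next
      case 2
      then show ?thesis using cover_eq_0 row by simp
    next
      case 3
      then show ?thesis
        unfolding row weight_joining_row_sum[OF joining 3(1)] deg_lift_joining
        by (simp add: field_simps)
    qed
  qed
  have cond_other: "deg \<beta> b * (\<Sum>k'\<in>UNIV. lifted (k,b) (k',b')) = \<beta> b b' * deg lifted (k,b)"
    for k b b'
  proof -
    have "deg \<beta> b * (\<Sum>a'\<in>UNIV. \<gamma> (\<phi> k, b) (a',b')) = \<beta> b b' * deg \<gamma> (\<phi> k, b)"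
      using joining unfolding weight_joining_def by blast
    then show ?thesis
      unfolding lift_joining_row_sum deg_lift_joining
      by (metis mult.left_commute times_divide_eq_left times_divide_eq_right)
  qed
  show ?thesis
    unfolding weight_joining_def
    using weight_fun_lift_joining marginal_cover marginal_other cond_cover cond_other by blast
qed

end

lemma strongly_disjoint_quotient:
  assumes "strongly_disjoint \<kappa> \<beta>"
  shows "strongly_disjoint \<alpha> \<beta>"
  unfolding strongly_disjoint_def
proof (intro allI impI)
  fix \<gamma> :: "'a \<times> 'b \<Rightarrow> 'a \<times> 'b \<Rightarrow> real"
  assume J: "weight_joining \<alpha> \<beta> \<gamma>"
  then have lifted: "lift_joining \<phi> \<kappa> \<alpha> \<gamma> = tensor_weight \<kappa> \<beta>"
    using assms weight_joining_lift_joining unfolding strongly_disjoint_def by blast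
  have "\<gamma> (a,b) (a',b') = \<alpha> a a' * \<beta> b b'" for a b a' b'
  proof -
    have "\<gamma> (a,b) (a',b')
        = (\<Sum>k\<in>\<phi> -` {a}. \<Sum>k'\<in>\<phi> -` {a'}. lift_joining \<phi> \<kappa> \<alpha> \<gamma> (k,b) (k',b'))"
      by (rule lift_joining_fibre_sum[OF J, symmetric])
    also have "\<dots> = (\<Sum>k\<in>\<phi> -` {a}. \<Sum>k'\<in>\<phi> -` {a'}. \<kappa> k k') * \<beta> b b'"
      by (simp add: lifted tensor_weight_def sum_distrib_right)
    also have "\<dots> = \<alpha> a a' * \<beta> b b'"
      by (simp only: fibre_block_sum)
    finally show ?thesis .
  qed
  then show "\<gamma> = tensor_weight \<alpha> \<beta>"
    unfolding tensor_weight_def by (auto simp: fun_eq_iff)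
qed

lemma weakly_disjoint_quotient:
  assumes "weakly_disjoint \<kappa> \<beta>"
  shows "weakly_disjoint \<alpha> \<beta>"
  unfolding weakly_disjoint_def
proof (intro allI impI)
  fix \<gamma> :: "'a \<times> 'b \<Rightarrow> 'a \<times> 'b \<Rightarrow> real" and a b
  assume J: "weight_joining \<alpha> \<beta> \<gamma>"
  then have lifted: "deg (lift_joining \<phi> \<kappa> \<alpha> \<gamma>) (k,b) = deg \<kappa> k * deg \<beta> b" for k
    using assms weight_joining_lift_joining unfolding weakly_disjoint_def by blast
  have "deg \<gamma> (a,b) = (\<Sum>k\<in>\<phi> -` {a}. deg (lift_joining \<phi> \<kappa> \<alpha> \<gamma>) (k,b))"
    by (rule deg_lift_joining_fibre_sum[OF J, symmetric])
  also have "\<dots> = (\<Sum>k\<in>\<phi> -` {a}. deg \<kappa> k) * deg \<beta> b"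
    by (simp add: lifted sum_distrib_right)
  also have "\<dots> = deg \<alpha> a * deg \<beta> b"
    by (simp only: deg_quotient)
  finally show "deg \<gamma> (a,b) = deg \<alpha> a * deg \<beta> b" .
qed

end

subsection \<open>Swapping the factors of a joining\<close>

definition swap_weight :: "('a \<times> 'b \<Rightarrow> 'a \<times> 'b \<Rightarrow> real) \<Rightarrow> ('b \<times> 'a \<Rightarrow> 'b \<times> 'a \<Rightarrow> real)" where
  "swap_weight \<gamma> = (\<lambda>(b,a) (b',a'). \<gamma> (a,b) (a',b'))"

lemma swap_weight_apply [simp]: "swap_weight \<gamma> (b,a) (b',a') = \<gamma> (a,b) (a',b')"
  unfolding swap_weight_def by simp

lemma swap_weight_swap_weight [simp]: "swap_weight (swap_weight \<gamma>) = \<gamma>"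
  by (auto simp: fun_eq_iff)

lemma swap_weight_tensor_weight: "swap_weight (tensor_weight \<alpha> \<beta>) = tensor_weight \<beta> \<alpha>"
  by (auto simp: fun_eq_iff tensor_weight_def)

lemma deg_swap_weight:
  fixes \<gamma> :: "'a::finite \<times> 'b::finite \<Rightarrow> 'a \<times> 'b \<Rightarrow> real"
  shows "deg (swap_weight \<gamma>) (b,a) = deg \<gamma> (a,b)"
  unfolding deg_prod[of "swap_weight \<gamma>"] swap_weight_apply by (rule deg_prod_swap[symmetric])

lemma weight_joining_swap_weight:
  fixes \<gamma> :: "'a::finite \<times> 'b::finite \<Rightarrow> 'a \<times> 'b \<Rightarrow> real"
  assumes J: "weight_joining \<alpha> \<beta> \<gamma>"
  shows "weight_joining \<beta> \<alpha> (swap_weight \<gamma>)"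
proof -
  have w: "weight_fun \<gamma>"
    using J by (rule weight_joining_weight_fun)
  have "weight_fun (swap_weight \<gamma>)"
  proof (rule weight_funI)
    show "0 \<le> swap_weight \<gamma> x y" for x y
      using weight_fun_nonneg[OF w] by (cases x; cases y) simp
    show "swap_weight \<gamma> x y = swap_weight \<gamma> y x" for x y
      using weight_fun_sym[OF w] by (cases x; cases y) simp
    show "(\<Sum>x\<in>UNIV. deg (swap_weight \<gamma>) x) = 1"
      using weight_fun_sum_deg[OF w]
      by (simp only: sum_UNIV_prod deg_swap_weight flip: sum_UNIV_prod_swap)
  qed
  then show ?thesis
    using J unfolding weight_joining_def deg_swap_weight swap_weight_apply by blast
qed

lemma strongly_disjoint_swap:
  fixes \<alpha> :: "'a::finite \<Rightarrow> 'a \<Rightarrow> real" and \<beta> :: "'b::finite \<Rightarrow> 'b \<Rightarrow> real"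
  assumes "strongly_disjoint \<alpha> \<beta>"
  shows "strongly_disjoint \<beta> \<alpha>"
  unfolding strongly_disjoint_def
proof (intro allI impI)
  fix \<gamma> :: "'b \<times> 'a \<Rightarrow> 'b \<times> 'a \<Rightarrow> real"
  assume "weight_joining \<beta> \<alpha> \<gamma>"
  then have "swap_weight \<gamma> = tensor_weight \<alpha> \<beta>"
    using assms weight_joining_swap_weight unfolding strongly_disjoint_def by blast
  then have "swap_weight (swap_weight \<gamma>) = swap_weight (tensor_weight \<alpha> \<beta>)"
    by (rule arg_cong)
  then show "\<gamma> = tensor_weight \<beta> \<alpha>"
    by (simp only: swap_weight_swap_weight swap_weight_tensor_weight)
qed

lemma weakly_disjoint_swap:
  fixes \<alpha> :: "'a::finite \<Rightarrow> 'a \<Rightarrow> real" and \<beta> :: "'b::finite \<Rightarrow> 'b \<Rightarrow> real"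
  assumes "weakly_disjoint \<alpha> \<beta>"
  shows "weakly_disjoint \<beta> \<alpha>"
  unfolding weakly_disjoint_def
proof (intro allI impI)
  fix \<gamma> :: "'b \<times> 'a \<Rightarrow> 'b \<times> 'a \<Rightarrow> real" and b a
  assume "weight_joining \<beta> \<alpha> \<gamma>"
  then have "deg (swap_weight \<gamma>) (a,b) = deg \<alpha> a * deg \<beta> b"
    using assms weight_joining_swap_weight unfolding weakly_disjoint_def by blast
  then show "deg \<gamma> (b,a) = deg \<beta> b * deg \<alpha> a"
    by (simp add: deg_swap_weight mult.commute)
qed

theorem proposition4p4:
  fixes aG :: "'g::finite \<Rightarrow> 'g \<Rightarrow> real" and bH :: "'h::finite \<Rightarrow> 'h \<Rightarrow> real"
    and aK :: "'k::finite \<Rightarrow> 'k \<Rightarrow> real" and bL :: "'l::finite \<Rightarrow> 'l \<Rightarrow> real"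
  assumes "weight_fun aG" and "weight_fun bH" and "weight_fun aK" and "weight_fun bL"
    and "graph_divides aG aK" and "graph_divides bH bL"
  shows "(strongly_disjoint aK bL \<longrightarrow> strongly_disjoint aG bH)
       \<and> (weakly_disjoint aK bL \<longrightarrow> weakly_disjoint aG bH)"
proof -
  obtain \<phi> :: "'k \<Rightarrow> 'g" where G: "factor_map aG aK \<phi>"
    using graph_divides_obtains_factor_map assms(5,1,3) by blast
  obtain \<psi> :: "'l \<Rightarrow> 'h" where H: "factor_map bH bL \<psi>"
    using graph_divides_obtains_factor_map assms(6,2,4) by blast
  have "strongly_disjoint aG bH" if "strongly_disjoint aK bL"
  proof -
    from that have "strongly_disjoint aG bL"
      by (rule factor_map.strongly_disjoint_quotient[OF G])
    then have "strongly_disjoint bH aG"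
      by (rule factor_map.strongly_disjoint_quotient[OF H, OF strongly_disjoint_swap])
    then show ?thesis
      by (rule strongly_disjoint_swap)
  qed
  moreover have "weakly_disjoint aG bH" if "weakly_disjoint aK bL"
  proof -
    from that have "weakly_disjoint aG bL"
      by (rule factor_map.weakly_disjoint_quotient[OF G])
    then have "weakly_disjoint bH aG"
      by (rule factor_map.weakly_disjoint_quotient[OF H, OF weakly_disjoint_swap])
    then show ?thesis
      by (rule weakly_disjoint_swap)
  qed
  ultimately show ?thesis by blast
qed

end
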